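(* In the setting below, with $\rho_m:=\sum_{G\in\mathcal A^m_{\ge L}(F)}\rho(G)$ and $\rho(G):=e^{-\beta H_{(\bar G)^c}}\prod_j\eta(G_j)$ (the $G_j$ being the connected components of $G$), one has for every integer $m\ge1$ $$\rho_m=\sum_{k=m}^\infty\binom km\sum_{w\in\mathcal C^k_{\ge L}(F)}f(w).$$
   Context: $V$ finite, $\mathcal H=\bigotimes_{x\in V}\mathcal H_x$ finite-dimensional; $H=\sum_{\lambda\in E}h_\lambda$, $h_\lambda$ Hermitian with support $\lambda$, $E$ the set of supports, $H_K=\sum_{\lambda\in K}h_\lambda$, $\beta\in\mathbb R$; $F\subset E$, $L\ge1$. Connected edge sets (animals): any two edges joined by a chain of consecutively intersecting edges in the set; connected components are maximal connected subsets. $\mathcal A_{\ge L}(F)$: connected $G\subset E$ with $|G|\ge L$, $G\cap F\ne\emptyset$; $\mathcal A^m_{\ge L}(F)$: unions of $m$ pairwise non-overlapping members of $\mathcal A_{\ge L}(F)$. $G^c=E\setminus G$, $\bar G=\{\lambda\in E:\exists\lambda'\in G,\lambda\cap\lambda'\ne\emptyset\}$. Words: $K^\ast=\bigcup_{l\ge0}K^l$, $|w|$ length, $h(w)=h_{w_1}\cdots h_{w_{|w|}}$, $f(w)=\frac{(-\beta)^{|w|}}{|w|!}h(w)$, $\eta(G'):=\sum_{w\in G'^\ast:\,G'\subset w}f(w)$ where $G'\subset w$ means each element of $G'$ occurs in $w$. Maximal clusters of $w$: subsequences of $w$ consisting of all letters lying in one connected component of the letter set of $w$. $\mathcal C^k_{\ge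 L}(F)$: words having exactly $k$ maximal clusters whose letter set has at least $L$ elements and contains an element of $F$. All series converge absolutely. *)

theory Defs
  imports "HOL-Analysis.Analysis"
begin

text \<open>Sites: a finite type 'v (V = UNIV). Site x carries the local space C^(d x), with
  basis indexed by {0..<d x}. The tensor product has basis the configurations below;
  operators are complex matrices indexed by configurations.\<close>

definition conf :: "('v \<Rightarrow> nat) \<Rightarrow> ('v \<Rightarrow> nat) set" where
  "conf d = {\<sigma>. \<forall>x. \<sigma> x < d x}"

type_synonym 'v qop = "('v \<Rightarrow> nat) \<Rightarrow> ('v \<Rightarrow> nat) \<Rightarrow> complex"

definition opid :: "'v qop" where
  "opid = (\<lambda>\<sigma> \<tau>. if \<sigma> = \<tau> then 1 else 0)"

definition opmult :: "('v \<Rightarrow> nat) \<Rightarrow> 'v qop \<Rightarrow> 'v qop \<Rightarrow> 'v qop" where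
  "opmult d A B = (\<lambda>\<sigma> \<tau>. \<Sum>\<rho>\<in>conf d. A \<sigma> \<rho> * B \<rho> \<tau>)"

definition opscale :: "complex \<Rightarrow> 'v qop \<Rightarrow> 'v qop" where
  "opscale c A = (\<lambda>\<sigma> \<tau>. c * A \<sigma> \<tau>)"

definition opsum :: "'a set \<Rightarrow> ('a \<Rightarrow> 'v qop) \<Rightarrow> 'v qop" where
  "opsum S g = (\<lambda>\<sigma> \<tau>. \<Sum>a\<in>S. g a \<sigma> \<tau>)"

primrec oppow :: "('v \<Rightarrow> nat) \<Rightarrow> 'v qop \<Rightarrow> nat \<Rightarrow> 'v qop" where
  "oppow d A 0 = opid"
| "oppow d A (Suc n) = opmult d A (oppow d A n)"

text \<open>Matrix exponential (the entrywise series converges in finite dimension).\<close>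
definition opexp :: "('v \<Rightarrow> nat) \<Rightarrow> 'v qop \<Rightarrow> 'v qop" where
  "opexp d A = (\<lambda>\<sigma> \<tau>. \<Sum>n. oppow d A n \<sigma> \<tau> / of_nat (fact n))"

text \<open>A acts as (something) tensor identity: A is supported in the site set S.\<close>
definition supported_in :: "('v \<Rightarrow> nat) \<Rightarrow> 'v set \<Rightarrow> 'v qop \<Rightarrow> bool" where
  "supported_in d S A \<longleftrightarrow>
     (\<forall>\<sigma>\<in>conf d. \<forall>\<tau>\<in>conf d. (\<exists>x. x \<notin> S \<and> \<sigma> x \<noteq> \<tau> x) \<longrightarrow> A \<sigma> \<tau> = 0) \<and>
     (\<forall>\<sigma>\<in>conf d. \<forall>\<tau>\<in>conf d. \<forall>\<sigma>'\<in>conf d. \<forall>\<tau>'\<in>conf d.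
        (\<forall>x\<in>S. \<sigma> x = \<sigma>' x \<and> \<tau> x = \<tau>' x) \<and> (\<forall>x. x \<notin> S \<longrightarrow> \<sigma> x = \<tau> x \<and> \<sigma>' x = \<tau>' x)
        \<longrightarrow> A \<sigma> \<tau> = A \<sigma>' \<tau>')"

definition hermitian :: "('v \<Rightarrow> nat) \<Rightarrow> 'v qop \<Rightarrow> bool" where
  "hermitian d A \<longleftrightarrow> (\<forall>\<sigma>\<in>conf d. \<forall>\<tau>\<in>conf d. A \<sigma> \<tau> = cnj (A \<tau> \<sigma>))"

definition wordop :: "('v \<Rightarrow> nat) \<Rightarrow> ('e \<Rightarrow> 'v qop) \<Rightarrow> 'e list \<Rightarrow> 'v qop" where
  "wordop d h w = foldr (\<lambda>a B. opmult d (h a) B) w opid"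

definition fw :: "('v \<Rightarrow> nat) \<Rightarrow> ('e \<Rightarrow> 'v qop) \<Rightarrow> real \<Rightarrow> 'e list \<Rightarrow> 'v qop" where
  "fw d h \<beta> w = opscale ((- complex_of_real \<beta>) ^ length w / of_nat (fact (length w))) (wordop d h w)"

definition eta :: "('v \<Rightarrow> nat) \<Rightarrow> ('e \<Rightarrow> 'v qop) \<Rightarrow> real \<Rightarrow> 'e set \<Rightarrow> 'v qop" where
  "eta d h \<beta> G = (\<lambda>\<sigma> \<tau>. \<Sum>\<^sub>\<infinity>w\<in>{w. set w \<subseteq> G \<and> G \<subseteq> set w}. fw d h \<beta> w \<sigma> \<tau>)"

definition connected_edges :: "'v set set \<Rightarrow> bool" where
  "connected_edges G \<longleftrightarrow>
     (\<forall>a\<in>G. \<forall>b\<in>G. (a, b) \<in> ({(x, y). x \<in> G \<and> y \<in> G \<and> x \<inter> y \<noteq> {}})\<^sup>*)"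

definition edge_components :: "'v set set \<Rightarrow> 'v set set set" where
  "edge_components G = {C. C \<subseteq> G \<and> C \<noteq> {} \<and> connected_edges C \<and>
      (\<forall>C'. C \<subseteq> C' \<and> C' \<subseteq> G \<and> connected_edges C' \<longrightarrow> C' = C)}"

definition edge_closure :: "'v set set \<Rightarrow> 'v set set \<Rightarrow> 'v set set" where
  "edge_closure E G = {l\<in>E. \<exists>l'\<in>G. l \<inter> l' \<noteq> {}}"

definition animals :: "'v set set \<Rightarrow> nat \<Rightarrow> 'v set set \<Rightarrow> 'v set set set" where
  "animals E L F = {G. G \<subseteq> E \<and> connected_edges G \<and> card G \<ge> L \<and> G \<inter> F \<noteq> {}}"

definition non_overlapping :: "'v set set \<Rightarrow> 'v set set \<Rightarrow> bool" where
  "non_overlapping A B \<longleftrightarrow> (\<forall>a\<in>A. \<forall>b\<in>B. a \<inter> b = {})"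

definition animals_m :: "'v set set \<Rightarrow> nat \<Rightarrow> 'v set set \<Rightarrow> nat \<Rightarrow> 'v set set set" where
  "animals_m E L F m = {\<Union>S | S. S \<subseteq> animals E L F \<and> card S = m \<and> pairwise non_overlapping S}"

text \<open>rho(G) = exp(-beta H_{(bar G)^c}) prod_j eta(G_j); the G_j pairwise commute, so an
  arbitrary enumeration of the components is used.\<close>
definition rhoG :: "('v \<Rightarrow> nat) \<Rightarrow> ('v set \<Rightarrow> 'v qop) \<Rightarrow> real \<Rightarrow> 'v set set \<Rightarrow> 'v set set \<Rightarrow> 'v qop" where
  "rhoG d h \<beta> E G =
     opmult d (opexp d (opscale (- complex_of_real \<beta>) (opsum (E - edge_closure E G) h)))
       (foldr (opmult d) (map (eta d h \<beta>) (SOME cs. distinct cs \<and> set cs = edge_components G)) opid)"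

definition rho_m :: "('v \<Rightarrow> nat) \<Rightarrow> ('v set \<Rightarrow> 'v qop) \<Rightarrow> real \<Rightarrow> 'v set set \<Rightarrow> nat \<Rightarrow> 'v set set \<Rightarrow> nat \<Rightarrow> 'v qop" where
  "rho_m d h \<beta> E L F m = opsum (animals_m E L F m) (rhoG d h \<beta> E)"

text \<open>The maximal clusters of w correspond to the connected components
  of its letter set (the cluster's letter set is the component).\<close>
definition cluster_words :: "'v set set \<Rightarrow> nat \<Rightarrow> 'v set set \<Rightarrow> nat \<Rightarrow> 'v set list set" where
  "cluster_words E L F k = {w. set w \<subseteq> E \<and>
      card {C \<in> edge_components (set w). card C \<ge> L \<and> C \<inter> F \<noteq> {}} = k}"

end

theory Submission
  imports Defs
begin

text \<open>Expand \<open>exp(-\<beta> H\<^sub>R)\<close> with \<open>R = (bar G)\<^sup>c\<close> and every \<open>\<eta>(G\<^sub>j)\<close> into sums over words.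
  Terms with non-overlapping supports commute, so the product of two words over non-overlapping
  letter sets equals each of their \<open>(a + b) choose a\<close> shuffles, and this binomial coefficient is
  exactly absorbed by the factorials in \<open>f\<close>: the product of the word sums over non-overlapping
  \<open>A\<close> and \<open>B\<close> is the word sum over \<open>A \<union> B\<close>. Since \<open>R\<close> and the components of \<open>G\<close> are pairwise
  non-overlapping, \<open>\<rho>(G)\<close> is the sum of \<open>f(w)\<close> over the words \<open>w\<close> over \<open>E\<close> among whose maximal
  clusters are all components of \<open>G\<close>. Summing over \<open>G\<close> thus counts every word with \<open>k\<close> large
  clusters once for every choice of \<open>m\<close> of them, i.e. \<open>k choose m\<close> times.\<close>

section \<open>Operators on configurations\<close>

text \<open>Only the entries indexed by \<open>conf d\<close> are meaningful (\<open>opid\<close> is not zero outside), so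
  operator identities are stated up to agreement there.\<close>

definition op_eq :: "('v \<Rightarrow> nat) \<Rightarrow> 'v qop \<Rightarrow> 'v qop \<Rightarrow> bool" where
  "op_eq d A B \<longleftrightarrow> (\<forall>\<sigma>\<in>conf d. \<forall>\<tau>\<in>conf d. A \<sigma> \<tau> = B \<sigma> \<tau>)"

lemma op_eq_refl [simp]: "op_eq d A A"
  by (simp add: op_eq_def)

lemma op_eq_sym: "op_eq d A B \<Longrightarrow> op_eq d B A"
  by (simp add: op_eq_def)

lemma op_eq_trans [trans]: "op_eq d A B \<Longrightarrow> op_eq d B C \<Longrightarrow> op_eq d A C"
  by (simp add: op_eq_def)

lemma finite_conf: "finite (conf (d :: 'v::finite \<Rightarrow> nat))"
proof -
  have "conf d \<subseteq> PiE UNIV (\<lambda>x. {..<d x})"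
    by (auto simp: conf_def PiE_def extensional_def)
  then show ?thesis
    by (rule finite_subset) (intro finite_PiE, auto)
qed

lemma opmult_assoc: "opmult d (opmult d A B) C = opmult d A (opmult d B C)"
  unfolding opmult_def
  by (auto simp: fun_eq_iff sum_distrib_left sum_distrib_right mult.assoc intro: sum.swap)

lemma opmult_cong: "op_eq d A A' \<Longrightarrow> op_eq d B B' \<Longrightarrow> op_eq d (opmult d A B) (opmult d A' B')"
  unfolding op_eq_def opmult_def by (auto intro!: sum.cong)

lemma opmult_opid_left: "op_eq d (opmult d opid A) (A :: 'v::finite qop)"
proof -
  have "(\<Sum>\<rho>\<in>conf d. (if \<sigma> = \<rho> then 1 else 0) * A \<rho> \<tau>) = A \<sigma> \<tau>" if "\<sigma> \<in> conf d" for \<sigma> \<tau>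
  proof -
    have "(\<Sum>\<rho>\<in>conf d. (if \<sigma> = \<rho> then 1 else 0) * A \<rho> \<tau>) = (\<Sum>\<rho>\<in>conf d. if \<sigma> = \<rho> then A \<rho> \<tau> else 0)"
      by (rule sum.cong) auto
    then show ?thesis
      using that by (simp add: finite_conf)
  qed
  then show ?thesis
    unfolding op_eq_def opmult_def opid_def by auto
qed

lemma opmult_opid_right: "op_eq d (opmult d A opid) (A :: 'v::finite qop)"
proof -
  have "(\<Sum>\<rho>\<in>conf d. A \<sigma> \<rho> * (if \<rho> = \<tau> then 1 else 0)) = A \<sigma> \<tau>" if "\<tau> \<in> conf d" for \<sigma> \<tau>
  proof -
    have "(\<Sum>\<rho>\<in>conf d. A \<sigma> \<rho> * (if \<rho> = \<tau> then 1 else 0)) = (\<Sum>\<rho>\<in>conf d. if \<rho> = \<tau> then A \<sigma> \<rho> else 0)"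
      by (rule sum.cong) auto
    then show ?thesis
      using that by (simp add: finite_conf)
  qed
  then show ?thesis
    unfolding op_eq_def opmult_def opid_def by auto
qed

lemma opmult_opscale: "opmult d (opscale a A) (opscale b B) = opscale (a * b) (opmult d A B)"
  unfolding opmult_def opscale_def by (auto simp: fun_eq_iff sum_distrib_left mult_ac)

lemma wordop_Nil [simp]: "wordop d h [] = opid"
  by (simp add: wordop_def)

lemma wordop_Cons [simp]: "wordop d h (x # w) = opmult d (h x) (wordop d h w)"
  by (simp add: wordop_def)

definition op_commute :: "('v \<Rightarrow> nat) \<Rightarrow> 'v qop \<Rightarrow> 'v qop \<Rightarrow> bool" where
  "op_commute d A B \<longleftrightarrow> op_eq d (opmult d A B) (opmult d B A)"

lemma op_commute_opid: "op_commute d (A :: 'v::finite qop) opid"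
  unfolding op_commute_def
  using op_eq_trans[OF opmult_opid_right op_eq_sym[OF opmult_opid_left]] .

lemma op_commute_opmult:
  assumes "op_commute d A B\<^sub>1" "op_commute d A B\<^sub>2"
  shows "op_commute d A (opmult d B\<^sub>1 B\<^sub>2)"
proof -
  have "op_eq d (opmult d A (opmult d B\<^sub>1 B\<^sub>2)) (opmult d (opmult d A B\<^sub>1) B\<^sub>2)"
    by (simp add: opmult_assoc)
  also have "op_eq d \<dots> (opmult d (opmult d B\<^sub>1 A) B\<^sub>2)"
    using assms(1) unfolding op_commute_def by (rule opmult_cong[OF _ op_eq_refl])
  also have "op_eq d \<dots> (opmult d B\<^sub>1 (opmult d A B\<^sub>2))"
    by (simp add: opmult_assoc)
  also have "op_eq d \<dots> (opmult d B\<^sub>1 (opmult d B\<^sub>2 A))"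
    using assms(2) unfolding op_commute_def by (rule opmult_cong[OF op_eq_refl])
  also have "op_eq d \<dots> (opmult d (opmult d B\<^sub>1 B\<^sub>2) A)"
    by (simp add: opmult_assoc)
  finally show ?thesis
    unfolding op_commute_def .
qed

lemma supported_in_eq_0:
  "supported_in d S A \<Longrightarrow> \<sigma> \<in> conf d \<Longrightarrow> \<tau> \<in> conf d \<Longrightarrow> x \<notin> S \<Longrightarrow> \<sigma> x \<noteq> \<tau> x \<Longrightarrow> A \<sigma> \<tau> = 0"
  unfolding supported_in_def by blast

lemma supported_in_local:
  assumes "supported_in d S A" "\<sigma> \<in> conf d" "\<tau> \<in> conf d" "\<sigma>' \<in> conf d" "\<tau>' \<in> conf d"
    and "\<And>x. x \<in> S \<Longrightarrow> \<sigma> x = \<sigma>' x \<and> \<tau> x = \<tau>' x"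
    and "\<And>x. x \<notin> S \<Longrightarrow> \<sigma> x = \<tau> x \<and> \<sigma>' x = \<tau>' x"
  shows "A \<sigma> \<tau> = A \<sigma>' \<tau>'"
  using assms unfolding supported_in_def by blast

lemma opmult_supported_eq_0:
  assumes A: "supported_in d S A" and B: "supported_in d T B" and \<sigma>: "\<sigma> \<in> conf d" and \<tau>: "\<tau> \<in> conf d"
    and x: "x \<notin> S" "x \<notin> T" "\<sigma> x \<noteq> \<tau> x"
  shows "opmult d A B \<sigma> \<tau> = 0"
  unfolding opmult_def
proof (rule sum.neutral, intro ballI)
  fix \<rho> assume \<rho>: "\<rho> \<in> conf d"
  have "A \<sigma> \<rho> = 0 \<or> B \<rho> \<tau> = 0"
    using supported_in_eq_0[OF A \<sigma> \<rho> x(1)] supported_in_eq_0[OF B \<rho> \<tau> x(2)] x(3) by metis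
  then show "A \<sigma> \<rho> * B \<rho> \<tau> = 0"
    by auto
qed

lemma opmult_supported_eq_single:
  fixes d :: "'v::finite \<Rightarrow> nat"
  assumes A: "supported_in d S A" and B: "supported_in d T B" and ST: "S \<inter> T = {}"
    and \<sigma>: "\<sigma> \<in> conf d" and \<tau>: "\<tau> \<in> conf d"
  defines "r \<equiv> \<lambda>x. if x \<in> S then \<tau> x else \<sigma> x"
  shows "opmult d A B \<sigma> \<tau> = A \<sigma> r * B r \<tau>"
proof -
  have r: "r \<in> conf d"
    using \<sigma> \<tau> by (auto simp: conf_def r_def)
  have "A \<sigma> \<rho> * B \<rho> \<tau> = 0" if \<rho>: "\<rho> \<in> conf d" "\<rho> \<noteq> r" for \<rho>
  proof -
    obtain x where x: "\<rho> x \<noteq> r x"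
      using \<rho>(2) by auto
    have "x \<in> S \<Longrightarrow> B \<rho> \<tau> = 0"
      using supported_in_eq_0[OF B \<rho>(1) \<tau>, of x] x ST by (auto simp: r_def)
    moreover have "x \<notin> S \<Longrightarrow> A \<sigma> \<rho> = 0"
      using supported_in_eq_0[OF A \<sigma> \<rho>(1), of x] x by (auto simp: r_def)
    ultimately show ?thesis
      by (cases "x \<in> S") auto
  qed
  then have "opmult d A B \<sigma> \<tau> = (\<Sum>\<rho>\<in>{r}. A \<sigma> \<rho> * B \<rho> \<tau>)"
    unfolding opmult_def using r by (intro sum.mono_neutral_right finite_conf) auto
  then show ?thesis
    by simp
qed

lemma supported_in_disjoint_commute:
  fixes d :: "'v::finite \<Rightarrow> nat"
  assumes A: "supported_in d S A" and B: "supported_in d T B" and ST: "S \<inter> T = {}"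
  shows "op_commute d A B"
  unfolding op_commute_def op_eq_def
proof (intro ballI)
  fix \<sigma> \<tau> assume \<sigma>: "\<sigma> \<in> conf d" and \<tau>: "\<tau> \<in> conf d"
  show "opmult d A B \<sigma> \<tau> = opmult d B A \<sigma> \<tau>"
  proof (cases "\<exists>x. x \<notin> S \<and> x \<notin> T \<and> \<sigma> x \<noteq> \<tau> x")
    case True
    then show ?thesis
      using opmult_supported_eq_0[OF A B \<sigma> \<tau>] opmult_supported_eq_0[OF B A \<sigma> \<tau>] by metis
  next
    case False
    define r\<^sub>1 where "r\<^sub>1 = (\<lambda>x. if x \<in> S then \<tau> x else \<sigma> x)"
    define r\<^sub>2 where "r\<^sub>2 = (\<lambda>x. if x \<in> T then \<tau> x else \<sigma> x)"
    have r: "r\<^sub>1 \<in> conf d" "r\<^sub>2 \<in> conf d"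
      using \<sigma> \<tau> by (auto simp: conf_def r\<^sub>1_def r\<^sub>2_def)
    have "A \<sigma> r\<^sub>1 = A r\<^sub>2 \<tau>"
      by (rule supported_in_local[OF A \<sigma> r(1) r(2) \<tau>]) (use False ST in \<open>auto simp: r\<^sub>1_def r\<^sub>2_def\<close>)
    moreover have "B r\<^sub>1 \<tau> = B \<sigma> r\<^sub>2"
      by (rule supported_in_local[OF B r(1) \<tau> \<sigma> r(2)]) (use False ST in \<open>auto simp: r\<^sub>1_def r\<^sub>2_def\<close>)
    moreover have "opmult d A B \<sigma> \<tau> = A \<sigma> r\<^sub>1 * B r\<^sub>1 \<tau>"
      unfolding r\<^sub>1_def by (rule opmult_supported_eq_single[OF A B ST \<sigma> \<tau>])
    moreover have "opmult d B A \<sigma> \<tau> = B \<sigma> r\<^sub>2 * A r\<^sub>2 \<tau>"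
      unfolding r\<^sub>2_def by (rule opmult_supported_eq_single[OF B A _ \<sigma> \<tau>]) (use ST in auto)
    ultimately show ?thesis
      by simp
  qed
qed

lemma opmult_opsum_left:
  "finite S \<Longrightarrow> opmult d (opsum S f) B = opsum S (\<lambda>a. opmult d (f a) B)"
  unfolding opmult_def opsum_def by (auto simp: fun_eq_iff sum_distrib_right intro: sum.swap)

lemma opmult_opsum_right:
  "finite S \<Longrightarrow> opmult d A (opsum S f) = opsum S (\<lambda>a. opmult d A (f a))"
  unfolding opmult_def opsum_def by (auto simp: fun_eq_iff sum_distrib_left intro: sum.swap)

lemma oppow_opsum_eq_sum_words:
  fixes d :: "'v::finite \<Rightarrow> nat" and R :: "'v set set"
  shows "op_eq d (oppow d (opscale c (opsum R h)) n)
           (opscale (c ^ n) (opsum {w. set w \<subseteq> R \<and> length w = n} (wordop d h)))"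
proof (induction n)
  case 0
  have "{w. set w \<subseteq> R \<and> length w = 0} = {[]}"
    by auto
  then show ?case
    by (simp add: op_eq_def opscale_def opsum_def)
next
  case (Suc n)
  define W where "W = (\<lambda>n. {w. set w \<subseteq> R \<and> length w = n})"
  have fin: "finite R" "finite (W n)"
    unfolding W_def by (simp_all add: finite_lists_length_eq)
  have W_Suc: "W (Suc n) = (\<lambda>(w, r). r # w) ` (W n \<times> R)" and
       inj: "inj_on (\<lambda>(w, r). r # w) (W n \<times> R)"
    unfolding W_def by (rule lists_length_Suc_eq) (auto simp: inj_on_def)
  have "op_eq d (oppow d (opscale c (opsum R h)) (Suc n))
      (opmult d (opscale c (opsum R h)) (opscale (c ^ n) (opsum (W n) (wordop d h))))"
    using Suc by (simp add: W_def opmult_cong)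
  also have "opmult d (opscale c (opsum R h)) (opscale (c ^ n) (opsum (W n) (wordop d h))) =
      opscale (c ^ Suc n) (opsum (W n \<times> R) (\<lambda>(w, r). wordop d h (r # w)))"
    using fin by (simp add: opmult_opscale opmult_opsum_left opmult_opsum_right mult.commute)
      (simp add: opsum_def sum.cartesian_product fun_eq_iff sum.swap[of _ R] split_def)
  also have "\<dots> = opscale (c ^ Suc n) (opsum (W (Suc n)) (wordop d h))"
    unfolding W_Suc opsum_def sum.reindex[OF inj] by (simp add: split_def)
  finally show ?case
    by (simp add: W_def)
qed

section \<open>Infinite sums\<close>

lemma has_sum_sum:
  fixes f :: "'i \<Rightarrow> 'a \<Rightarrow> 'b::topological_comm_monoid_add"
  assumes "finite I" "\<And>i. i \<in> I \<Longrightarrow> (f i has_sum s i) A"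
  shows "((\<lambda>x. \<Sum>i\<in>I. f i x) has_sum (\<Sum>i\<in>I. s i)) A"
  using assms by (induction I rule: finite_induct) (simp_all add: has_sum_add)

lemma infsum_sum:
  fixes f :: "'i \<Rightarrow> 'a \<Rightarrow> 'b::{topological_comm_monoid_add, t2_space}"
  assumes "finite I" "\<And>i. i \<in> I \<Longrightarrow> f i summable_on A"
  shows "(\<Sum>\<^sub>\<infinity>x\<in>A. \<Sum>i\<in>I. f i x) = (\<Sum>i\<in>I. \<Sum>\<^sub>\<infinity>x\<in>A. f i x)"
  using assms by (intro infsumI has_sum_sum has_sum_infsum)

lemma summable_on_product_complex:
  fixes f g :: "_ \<Rightarrow> complex"
  assumes "f summable_on A" "g summable_on B"
  shows "(\<lambda>(x, y). f x * g y) summable_on A \<times> B"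
proof -
  have f: "(\<lambda>x. norm (f x)) summable_on A" and g: "(\<lambda>y. norm (g y)) summable_on B"
    using assms summable_on_iff_abs_summable_on_complex by blast+
  have "(\<lambda>z. norm ((\<lambda>(x, y). f x * g y) z)) summable_on Sigma A (\<lambda>_. B)"
  proof (rule iffD2[OF Infinite_Sum.abs_summable_on_Sigma_iff], intro conjI ballI)
    fix x
    show "(\<lambda>y. norm ((\<lambda>(x, y). f x * g y) (x, y))) summable_on B"
      using summable_on_cmult_right[OF g, of "norm (f x)"] by (simp add: norm_mult)
  next
    have "norm (\<Sum>\<^sub>\<infinity>y\<in>B. norm ((\<lambda>(x, y). f x * g y) (x, y))) = norm (f x) * (\<Sum>\<^sub>\<infinity>y\<in>B. norm (g y))" for x
      by (simp add: norm_mult infsum_cmult_right' infsum_nonneg)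
    then show "(\<lambda>x. norm (\<Sum>\<^sub>\<infinity>y\<in>B. norm ((\<lambda>(x, y). f x * g y) (x, y)))) summable_on A"
      using summable_on_cmult_left[OF f] by simp
  qed
  then show ?thesis
    using summable_on_iff_abs_summable_on_complex by blast
qed

lemma infsum_product_complex:
  fixes f g :: "_ \<Rightarrow> complex"
  assumes "f summable_on A" "g summable_on B"
  shows "(\<Sum>\<^sub>\<infinity>(x, y)\<in>A \<times> B. f x * g y) = infsum f A * infsum g B"
proof -
  have "(\<Sum>\<^sub>\<infinity>(x, y)\<in>A \<times> B. f x * g y) = (\<Sum>\<^sub>\<infinity>x\<in>A. \<Sum>\<^sub>\<infinity>y\<in>B. f x * g y)"
    using infsum_Sigma'_banach[of "\<lambda>x y. f x * g y" A "\<lambda>_. B"] summable_on_product_complex[OF assms]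
    by simp
  also have "\<dots> = infsum f A * infsum g B"
    by (simp add: infsum_cmult_right' infsum_cmult_left')
  finally show ?thesis .
qed

lemma has_sum_group:
  fixes f :: "'a \<Rightarrow> 'c::banach"
  assumes f: "(f has_sum s) A" and g: "g ` A \<subseteq> K"
  shows "((\<lambda>k. \<Sum>\<^sub>\<infinity>x\<in>{x\<in>A. g x = k}. f x) has_sum s) K"
proof -
  have "bij_betw (\<lambda>x. (g x, x)) A (SIGMA k:K. {x\<in>A. g x = k})"
    using g by (intro bij_betwI') auto
  then have Sigma: "((\<lambda>(k, x). f x) has_sum s) (SIGMA k:K. {x\<in>A. g x = k})"
    using f by (simp add: has_sum_reindex_bij_betw[symmetric])
  have "(f has_sum (\<Sum>\<^sub>\<infinity>x\<in>{x\<in>A. g x = k}. f x)) {x\<in>A. g x = k}" for k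
    by (rule has_sum_infsum, rule summable_on_subset_banach[OF has_sum_imp_summable[OF f]]) auto
  then have "((\<lambda>x. (\<lambda>(k, x). f x) (k, x)) has_sum (\<Sum>\<^sub>\<infinity>x\<in>{x\<in>A. g x = k}. f x)) {x\<in>A. g x = k}" for k
    by simp
  then show ?thesis
    by (rule has_sum_Sigma[OF isUCont_plus Sigma])
qed

lemma has_sum_double_counting:
  fixes f :: "'a \<Rightarrow> 'c::{banach, real_normed_algebra_1}"
  assumes P: "finite P" and f: "f summable_on W"
  shows "((\<lambda>w. of_nat (card {p\<in>P. R p w}) * f w) has_sum (\<Sum>p\<in>P. \<Sum>\<^sub>\<infinity>w\<in>{w\<in>W. R p w}. f w)) W"
proof -
  have "((\<lambda>w. if R p w then f w else 0) has_sum (\<Sum>\<^sub>\<infinity>w\<in>{w\<in>W. R p w}. f w)) W" for p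
  proof -
    have "f summable_on {w\<in>W. R p w}"
      by (rule summable_on_subset_banach[OF f]) auto
    then show ?thesis
      by (rule has_sum_infsum[THEN has_sum_cong_neutral[THEN iffD1, rotated 3]]) auto
  qed
  then have "((\<lambda>w. \<Sum>p\<in>P. if R p w then f w else 0) has_sum (\<Sum>p\<in>P. \<Sum>\<^sub>\<infinity>w\<in>{w\<in>W. R p w}. f w)) W"
    by (rule has_sum_sum[OF P])
  then show ?thesis
    using P by (simp add: sum.If_cases Collect_conj_eq)
qed

lemma opmult_infsum:
  fixes d :: "'v::finite \<Rightarrow> nat"
  assumes "\<And>\<rho>. \<rho> \<in> conf d \<Longrightarrow> (\<lambda>u. P u \<sigma> \<rho>) summable_on U"
    and "\<And>\<rho>. \<rho> \<in> conf d \<Longrightarrow> (\<lambda>v. Q v \<rho> \<tau>) summable_on V"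
  shows "opmult d (\<lambda>\<sigma> \<tau>. \<Sum>\<^sub>\<infinity>u\<in>U. P u \<sigma> \<tau>) (\<lambda>\<sigma> \<tau>. \<Sum>\<^sub>\<infinity>v\<in>V. Q v \<sigma> \<tau>) \<sigma> \<tau> =
    (\<Sum>\<^sub>\<infinity>(u, v)\<in>U \<times> V. opmult d (P u) (Q v) \<sigma> \<tau>)"
proof -
  have "opmult d (\<lambda>\<sigma> \<tau>. \<Sum>\<^sub>\<infinity>u\<in>U. P u \<sigma> \<tau>) (\<lambda>\<sigma> \<tau>. \<Sum>\<^sub>\<infinity>v\<in>V. Q v \<sigma> \<tau>) \<sigma> \<tau> =
      (\<Sum>\<rho>\<in>conf d. \<Sum>\<^sub>\<infinity>(u, v)\<in>U \<times> V. P u \<sigma> \<rho> * Q v \<rho> \<tau>)"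
    unfolding opmult_def using assms by (intro sum.cong refl infsum_product_complex[symmetric])
  also have "\<dots> = (\<Sum>\<^sub>\<infinity>(u, v)\<in>U \<times> V. \<Sum>\<rho>\<in>conf d. P u \<sigma> \<rho> * Q v \<rho> \<tau>)"
  proof -
    have "(\<lambda>(u, v). P u \<sigma> \<rho> * Q v \<rho> \<tau>) summable_on U \<times> V" if "\<rho> \<in> conf d" for \<rho>
      using assms that by (intro summable_on_product_complex)
    then show ?thesis
      unfolding case_prod_unfold by (intro infsum_sum[symmetric] finite_conf) simp
  qed
  finally show ?thesis
    by (simp add: opmult_def case_prod_unfold)
qed

section \<open>Words and shuffles\<close>

definition words :: "'a set \<Rightarrow> 'a set \<Rightarrow> 'a list set" where
  "words X Y = {w. set w \<subseteq> X \<and> Y \<subseteq> set w}"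

lemma in_shuffles_filter:
  assumes "set w \<subseteq> A \<union> B" "A \<inter> B = {}"
  shows "w \<in> shuffles (filter (\<lambda>x. x \<in> A) w) (filter (\<lambda>x. x \<in> B) w)"
  using assms
proof (induction w)
  case (Cons x w)
  then show ?case
    by (cases "x \<in> A") (auto intro: Cons_in_shuffles_leftI Cons_in_shuffles_rightI)
qed simp

lemma filter_in_shuffles:
  assumes "w \<in> shuffles u v" "set u \<subseteq> A" "set v \<inter> A = {}"
  shows "filter (\<lambda>x. x \<in> A) w = u"
proof -
  have "filter (\<lambda>x. x \<in> A) w \<in> shuffles (filter (\<lambda>x. x \<in> A) u) (filter (\<lambda>x. x \<in> A) v)"
    using assms(1) filter_shuffles[of "\<lambda>x. x \<in> A" u v] by blast
  moreover have "filter (\<lambda>x. x \<in> A) u = u" "filter (\<lambda>x. x \<in> A) v = []"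
    using assms(2,3) by (auto simp: filter_empty_conv filter_id_conv)
  ultimately show ?thesis
    by simp
qed

lemma words_Un_bij_shuffles:
  assumes AB: "A \<inter> B = {}" and "A' \<subseteq> A" "B' \<subseteq> B"
  shows "bij_betw (\<lambda>w. ((filter (\<lambda>x. x \<in> A) w, filter (\<lambda>x. x \<in> B) w), w))
           (words (A \<union> B) (A' \<union> B')) (SIGMA (u, v):words A A' \<times> words B B'. shuffles u v)"
proof (rule bij_betwI[where g = snd])
  show "(\<lambda>w. ((filter (\<lambda>x. x \<in> A) w, filter (\<lambda>x. x \<in> B) w), w)) \<in>
      words (A \<union> B) (A' \<union> B') \<rightarrow> (SIGMA (u, v):words A A' \<times> words B B'. shuffles u v)"
  proof
    fix w assume w: "w \<in> words (A \<union> B) (A' \<union> B')"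
    then have "filter (\<lambda>x. x \<in> A) w \<in> words A A'" "filter (\<lambda>x. x \<in> B) w \<in> words B B'"
      using assms by (auto simp: words_def)
    moreover have "w \<in> shuffles (filter (\<lambda>x. x \<in> A) w) (filter (\<lambda>x. x \<in> B) w)"
      using w AB by (intro in_shuffles_filter) (auto simp: words_def)
    ultimately show "((filter (\<lambda>x. x \<in> A) w, filter (\<lambda>x. x \<in> B) w), w) \<in>
        (SIGMA (u, v):words A A' \<times> words B B'. shuffles u v)"
      by simp
  qed
  have "w \<in> words (A \<union> B) (A' \<union> B') \<and> filter (\<lambda>x. x \<in> A) w = u \<and> filter (\<lambda>x. x \<in> B) w = v"
    if "((u, v), w) \<in> (SIGMA (u, v):words A A' \<times> words B B'. shuffles u v)" for u v w
  proof -
    from that have w: "w \<in> shuffles u v"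
      and u: "set u \<subseteq> A" "A' \<subseteq> set u" and v: "set v \<subseteq> B" "B' \<subseteq> set v"
      by (auto simp: words_def)
    have "filter (\<lambda>x. x \<in> A) w = u"
      using AB u v by (intro filter_in_shuffles[OF w]) auto
    moreover have "filter (\<lambda>x. x \<in> B) w = v"
      using AB u v by (intro filter_in_shuffles[OF w[unfolded shuffles_commutes[of u]]]) auto
    moreover have "w \<in> words (A \<union> B) (A' \<union> B')"
      using set_shuffles[OF w] u v by (auto simp: words_def)
    ultimately show ?thesis
      by blast
  qed
  then show "snd \<in> (SIGMA (u, v):words A A' \<times> words B B'. shuffles u v) \<rightarrow> words (A \<union> B) (A' \<union> B')"
    and "\<And>p. p \<in> (SIGMA (u, v):words A A' \<times> words B B'. shuffles u v) \<Longrightarrow>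
      ((filter (\<lambda>x. x \<in> A) (snd p), filter (\<lambda>x. x \<in> B) (snd p)), snd p) = p"
    by force+
qed simp

lemma infsum_words_Un_shuffles:
  fixes g :: "'a list \<Rightarrow> 'c::banach"
  assumes "A \<inter> B = {}" "A' \<subseteq> A" "B' \<subseteq> B" and g: "g summable_on words (A \<union> B) (A' \<union> B')"
  shows "(\<Sum>\<^sub>\<infinity>(u, v)\<in>words A A' \<times> words B B'. \<Sum>w\<in>shuffles u v. g w) =
    (\<Sum>\<^sub>\<infinity>w\<in>words (A \<union> B) (A' \<union> B'). g w)"
proof -
  note bij = words_Un_bij_shuffles[OF assms(1-3)]
  have sum: "(\<lambda>(p, w). g w) summable_on (SIGMA (u, v):words A A' \<times> words B B'. shuffles u v)"
    using summable_on_reindex_bij_betw[OF bij, of "\<lambda>(p, w). g w"] g by simp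
  have "(\<Sum>\<^sub>\<infinity>(u, v)\<in>words A A' \<times> words B B'. \<Sum>w\<in>shuffles u v. g w) =
      (\<Sum>\<^sub>\<infinity>p\<in>words A A' \<times> words B B'. \<Sum>\<^sub>\<infinity>w\<in>(case p of (u, v) \<Rightarrow> shuffles u v). g w)"
    by (intro infsum_cong) (simp add: case_prod_unfold)
  also have "\<dots> = (\<Sum>\<^sub>\<infinity>(p, w)\<in>(SIGMA (u, v):words A A' \<times> words B B'. shuffles u v). g w)"
    using infsum_Sigma'_banach[OF sum] by simp
  also have "\<dots> = (\<Sum>\<^sub>\<infinity>w\<in>words (A \<union> B) (A' \<union> B'). g w)"
    using infsum_reindex_bij_betw[OF bij, of "\<lambda>(p, w). g w"] by simp
  finally show ?thesis .
qed

lemma sum_words_le_exp: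
  fixes x :: real
  assumes E: "finite E" and "x \<ge> 0" and F: "finite F" "F \<subseteq> {w. set w \<subseteq> E}"
  shows "(\<Sum>w\<in>F. x ^ length w / fact (length w)) \<le> exp (real (card E) * x)"
proof -
  define N where "N = (\<Sum>w\<in>F. length w)"
  define W where "W = {w. set w \<subseteq> E \<and> length w \<le> N}"
  have "finite W"
    unfolding W_def by (rule finite_lists_length_le[OF E])
  have "F \<subseteq> W"
    using F unfolding W_def N_def by (auto intro: member_le_sum)
  then have "(\<Sum>w\<in>F. x ^ length w / fact (length w)) \<le> (\<Sum>w\<in>W. x ^ length w / fact (length w))"
    using \<open>finite W\<close> \<open>x \<ge> 0\<close> by (intro sum_mono2) auto
  also have "\<dots> = (\<Sum>n\<le>N. \<Sum>w\<in>{w\<in>W. length w = n}. x ^ length w / fact (length w))"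
    using \<open>finite W\<close> by (intro sum.group[symmetric]) (auto simp: W_def)
  also have "\<dots> = (\<Sum>n\<le>N. (real (card E) * x) ^ n / fact n)"
  proof (rule sum.cong)
    fix n assume "n \<in> {..N}"
    then have "{w\<in>W. length w = n} = {w. set w \<subseteq> E \<and> length w = n}"
      by (auto simp: W_def)
    then show "(\<Sum>w\<in>{w\<in>W. length w = n}. x ^ length w / fact (length w)) = (real (card E) * x) ^ n / fact n"
      by (simp add: card_lists_length_eq[OF E] power_mult_distrib)
  qed simp
  also have "\<dots> \<le> exp (real (card E) * x)"
  proof -
    have "(\<lambda>n. (real (card E) * x) ^ n / fact n) sums exp (real (card E) * x)"
      using exp_converges[of "real (card E) * x"] by (simp add: divide_inverse mult.commute)
    then show ?thesis
      using \<open>x \<ge> 0\<close> by (intro sum_le_suminf[of _ "{..N}", THEN order_trans]) (auto simp: sums_iff)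
  qed
  finally show ?thesis .
qed

definition exp_coeff :: "complex \<Rightarrow> nat \<Rightarrow> complex" where
  "exp_coeff z n = z ^ n / of_nat (fact n)"

lemma exp_coeff_add: "of_nat ((k + j) choose k) * exp_coeff z (k + j) = exp_coeff z k * exp_coeff z j"
proof -
  have "fact k * fact j * ((k + j) choose k) = fact (k + j)"
    using binomial_fact_lemma[of k "k + j"] by simp
  then have "(of_nat (fact k) :: complex) * of_nat (fact j) * of_nat ((k + j) choose k) = of_nat (fact (k + j))"
    by (metis of_nat_mult)
  then show ?thesis
    unfolding exp_coeff_def by (simp add: field_simps power_add)
qed

lemma fw_eq_opscale: "fw d h \<beta> w = opscale (exp_coeff (- complex_of_real \<beta>) (length w)) (wordop d h w)"
  by (simp add: fw_def exp_coeff_def)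

section \<open>Edge components\<close>

definition edge_adj :: "'v set set \<Rightarrow> ('v set \<times> 'v set) set" where
  "edge_adj G = {(x, y). x \<in> G \<and> y \<in> G \<and> x \<inter> y \<noteq> {}}"

lemma connected_edges_iff: "connected_edges G \<longleftrightarrow> (\<forall>a\<in>G. \<forall>b\<in>G. (a, b) \<in> (edge_adj G)\<^sup>*)"
  unfolding connected_edges_def edge_adj_def by simp

lemma connected_edges_Un:
  assumes "connected_edges A" "connected_edges B" "x \<in> A" "x \<in> B"
  shows "connected_edges (A \<union> B)"
  unfolding connected_edges_iff
proof (intro ballI)
  fix a b assume "a \<in> A \<union> B" "b \<in> A \<union> B"
  have "(edge_adj A)\<^sup>* \<subseteq> (edge_adj (A \<union> B))\<^sup>*" "(edge_adj B)\<^sup>* \<subseteq> (edge_adj (A \<union> B))\<^sup>*"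
    by (auto intro!: rtrancl_mono simp: edge_adj_def)
  then have "(a, x) \<in> (edge_adj (A \<union> B))\<^sup>*" "(x, b) \<in> (edge_adj (A \<union> B))\<^sup>*"
    using \<open>a \<in> A \<union> B\<close> \<open>b \<in> A \<union> B\<close> assms unfolding connected_edges_iff by blast+
  then show "(a, b) \<in> (edge_adj (A \<union> B))\<^sup>*"
    by (rule rtrancl_trans)
qed

lemma connected_edges_pair: "l \<inter> l' \<noteq> {} \<Longrightarrow> connected_edges {l, l'}"
  unfolding connected_edges_iff
proof (intro ballI)
  fix a b assume "l \<inter> l' \<noteq> {}" "a \<in> {l, l'}" "b \<in> {l, l'}"
  moreover have "(l, l') \<in> edge_adj {l, l'}" "(l', l) \<in> edge_adj {l, l'}"
    using \<open>l \<inter> l' \<noteq> {}\<close> by (auto simp: edge_adj_def)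
  ultimately show "(a, b) \<in> (edge_adj {l, l'})\<^sup>*"
    by auto
qed

lemma connected_edges_insert:
  assumes "connected_edges A" "l' \<in> A" "l \<inter> l' \<noteq> {}"
  shows "connected_edges (insert l A)"
proof -
  have "connected_edges (A \<union> {l, l'})"
    using assms connected_edges_pair[OF assms(3)] by (intro connected_edges_Un[of _ _ l']) auto
  moreover have "A \<union> {l, l'} = insert l A"
    using assms by auto
  ultimately show ?thesis
    by simp
qed

lemma edge_componentsD:
  "C \<in> edge_components W \<Longrightarrow> C \<subseteq> W \<and> C \<noteq> {} \<and> connected_edges C"
  unfolding edge_components_def by blast

lemma edge_components_maximal:
  "C \<in> edge_components W \<Longrightarrow> C \<subseteq> C' \<Longrightarrow> C' \<subseteq> W \<Longrightarrow> connected_edges C' \<Longrightarrow> C' = C"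
  unfolding edge_components_def by blast

lemma pairwise_non_overlapping_edge_components: "pairwise non_overlapping (edge_components W)"
  unfolding pairwise_def non_overlapping_def
proof (intro ballI impI, rule ccontr)
  fix C\<^sub>1 C\<^sub>2 a b
  assume C\<^sub>1: "C\<^sub>1 \<in> edge_components W" and C\<^sub>2: "C\<^sub>2 \<in> edge_components W" and "C\<^sub>1 \<noteq> C\<^sub>2"
    and a: "a \<in> C\<^sub>1" and b: "b \<in> C\<^sub>2" and "a \<inter> b \<noteq> {}"
  let ?C = "insert b C\<^sub>1 \<union> C\<^sub>2"
  have "connected_edges (insert b C\<^sub>1)"
    using edge_componentsD[OF C\<^sub>1] a \<open>a \<inter> b \<noteq> {}\<close> by (intro connected_edges_insert[of _ a]) (auto simp: Int_commute)
  then have conn: "connected_edges ?C"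
    using b edge_componentsD[OF C\<^sub>2] by (intro connected_edges_Un[of _ _ b]) auto
  have sub: "?C \<subseteq> W"
    using edge_componentsD[OF C\<^sub>1] edge_componentsD[OF C\<^sub>2] b by blast
  have "?C = C\<^sub>1"
    by (rule edge_components_maximal[OF C\<^sub>1 _ sub conn]) blast
  moreover have "?C = C\<^sub>2"
    by (rule edge_components_maximal[OF C\<^sub>2 _ sub conn]) blast
  ultimately show False
    using \<open>C\<^sub>1 \<noteq> C\<^sub>2\<close> by simp
qed

definition separated_animals :: "'v set set \<Rightarrow> 'v set set set \<Rightarrow> bool" where
  "separated_animals E S \<longleftrightarrow>
     (\<forall>C\<in>S. C \<noteq> {} \<and> connected_edges C \<and> C \<subseteq> E) \<and> pairwise non_overlapping S"

text \<open>A connected set of edges inside \<open>W\<close> that meets the animal \<open>C \<in> S\<close> cannot leave \<open>C\<close>: its next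
  edge would touch \<open>\<Union>S\<close>, hence lie in \<open>\<Union>S\<close>, and the animals of \<open>S\<close> do not overlap.\<close>

lemma separated_animals_connected_subset:
  assumes S: "separated_animals E S" and C: "C \<in> S" and a: "a \<in> C"
    and W: "W \<subseteq> \<Union>S \<union> (E - edge_closure E (\<Union>S))" "W \<subseteq> E"
    and C': "C \<subseteq> C'" "C' \<subseteq> W" "connected_edges C'"
  shows "C' \<subseteq> C"
proof
  fix x assume "x \<in> C'"
  then have "(a, x) \<in> (edge_adj C')\<^sup>*"
    using C' a unfolding connected_edges_iff by blast
  then show "x \<in> C"
  proof (induction rule: rtrancl_induct)
    case (step y z)
    then have yz: "y \<inter> z \<noteq> {}" "z \<in> W"
      using C' by (auto simp: edge_adj_def)
    have "z \<in> edge_closure E (\<Union>S)"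
      using W yz step.IH C unfolding edge_closure_def by blast
    then obtain C'' where C'': "C'' \<in> S" "z \<in> C''"
      using W yz by blast
    have "C'' = C"
    proof (rule ccontr)
      assume "C'' \<noteq> C"
      then have "non_overlapping C C''"
        using S C C''(1) by (auto simp: separated_animals_def pairwise_def)
      then show False
        using step.IH C''(2) yz(1) by (auto simp: non_overlapping_def)
    qed
    then show ?case
      using C'' by simp
  qed (use a in simp)
qed

lemma subset_edge_components_iff:
  assumes S: "separated_animals E S" and W: "W \<subseteq> E"
  shows "S \<subseteq> edge_components W \<longleftrightarrow> \<Union>S \<subseteq> W \<and> W \<subseteq> \<Union>S \<union> (E - edge_closure E (\<Union>S))"
proof
  assume SW: "S \<subseteq> edge_components W"
  have "l \<in> \<Union>S" if l: "l \<in> W" "l \<in> edge_closure E (\<Union>S)" for l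
  proof -
    obtain C l' where C: "C \<in> S" "l' \<in> C" "l \<inter> l' \<noteq> {}"
      using l unfolding edge_closure_def by auto
    then have C': "C \<in> edge_components W"
      using SW by auto
    have "insert l C = C"
      using edge_componentsD[OF C'] C l
      by (intro edge_components_maximal[OF C'] connected_edges_insert) auto
    then show ?thesis
      using C by auto
  qed
  moreover have "\<Union>S \<subseteq> W"
    using SW by (auto dest: edge_componentsD)
  ultimately show "\<Union>S \<subseteq> W \<and> W \<subseteq> \<Union>S \<union> (E - edge_closure E (\<Union>S))"
    using W by blast
next
  assume *: "\<Union>S \<subseteq> W \<and> W \<subseteq> \<Union>S \<union> (E - edge_closure E (\<Union>S))"
  show "S \<subseteq> edge_components W"
  proof
    fix C assume C: "C \<in> S"
    then obtain a where "a \<in> C" "connected_edges C"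
      using S by (auto simp: separated_animals_def)
    then show "C \<in> edge_components W"
      using separated_animals_connected_subset[OF S C \<open>a \<in> C\<close> _ W] * C
      unfolding edge_components_def by blast
  qed
qed

lemma edge_components_Union:
  assumes S: "separated_animals E S"
  shows "edge_components (\<Union>S) = S"
proof
  have SE: "\<Union>S \<subseteq> E"
    using S by (auto simp: separated_animals_def)
  show S_sub: "S \<subseteq> edge_components (\<Union>S)"
    using subset_edge_components_iff[OF S SE] by auto
  show "edge_components (\<Union>S) \<subseteq> S"
  proof
    fix D assume D: "D \<in> edge_components (\<Union>S)"
    then obtain x C where C: "C \<in> S" "x \<in> C" "x \<in> D"
      using edge_componentsD by blast
    have C': "C \<in> edge_components (\<Union>S)"
      using C S_sub by auto
    have conn: "connected_edges (D \<union> C)"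
      using C edge_componentsD[OF D] edge_componentsD[OF C'] by (intro connected_edges_Un[of _ _ x]) auto
    have sub: "D \<union> C \<subseteq> \<Union>S"
      using edge_componentsD[OF D] edge_componentsD[OF C'] by blast
    have "D \<union> C = D" "D \<union> C = C"
      by (rule edge_components_maximal[OF D _ sub conn] edge_components_maximal[OF C' _ sub conn]; blast)+
    then show "D \<in> S"
      using C by simp
  qed
qed

section \<open>Counting large clusters\<close>

definition large_clusters :: "nat \<Rightarrow> 'v set set \<Rightarrow> 'v set list \<Rightarrow> 'v set set set" where
  "large_clusters L F w = {C \<in> edge_components (set w). card C \<ge> L \<and> C \<inter> F \<noteq> {}}"

text \<open>Each member of \<open>animals_m E L F m\<close> is the union of exactly one family in
  \<open>animal_choices E L F m\<close>, recovered as its set of edge components.\<close>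

definition animal_choices :: "'v set set \<Rightarrow> nat \<Rightarrow> 'v set set \<Rightarrow> nat \<Rightarrow> 'v set set set set" where
  "animal_choices E L F m = {S. S \<subseteq> animals E L F \<and> card S = m \<and> pairwise non_overlapping S}"

lemma finite_large_clusters: "finite (large_clusters L F w)"
  by (rule finite_subset[of _ "Pow (set w)"]) (auto simp: large_clusters_def edge_components_def)

lemma separated_animals_choice: "L \<ge> 1 \<Longrightarrow> S \<in> animal_choices E L F m \<Longrightarrow> separated_animals E S"
  unfolding animal_choices_def separated_animals_def animals_def by (auto simp: card_gt_0_iff)

lemma animal_choices_components_iff:
  assumes "set w \<subseteq> E"
  shows "S \<in> animal_choices E L F m \<and> S \<subseteq> edge_components (set w) \<longleftrightarrow>
    S \<subseteq> large_clusters L F w \<and> card S = m"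
proof -
  have "C \<in> animals E L F \<longleftrightarrow> L \<le> card C \<and> C \<inter> F \<noteq> {}" if "C \<in> edge_components (set w)" for C
    using edge_componentsD[OF that] assms by (auto simp: animals_def)
  then have "S \<subseteq> large_clusters L F w \<longleftrightarrow> S \<subseteq> edge_components (set w) \<and> S \<subseteq> animals E L F"
    unfolding large_clusters_def by blast
  moreover have "S \<subseteq> edge_components (set w) \<Longrightarrow> pairwise non_overlapping S"
    using pairwise_subset[OF pairwise_non_overlapping_edge_components] .
  ultimately show ?thesis
    unfolding animal_choices_def by blast
qed

lemma finite_animal_choices: "finite (animal_choices (E :: 'v::finite set set) L F m)"
  by (rule finite_subset[OF subset_UNIV]) simp

lemma card_animal_choices_components:
  assumes "set w \<subseteq> E"
  shows "card {S \<in> animal_choices E L F m. S \<subseteq> edge_components (set w)} = card (large_clusters L F w) choose m"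
proof -
  have "{S \<in> animal_choices E L F m. S \<subseteq> edge_components (set w)} = {S. S \<subseteq> large_clusters L F w \<and> card S = m}"
    using animal_choices_components_iff[OF assms] by blast
  then show ?thesis
    by (simp add: n_subsets[OF finite_large_clusters])
qed

lemma infsum_cluster_words:
  fixes f :: "'v set list \<Rightarrow> 'c::{banach, real_normed_div_algebra}"
  assumes "((\<lambda>w. of_nat (card (large_clusters L F w) choose m) * f w) has_sum s) (words E {})"
  shows "(\<Sum>\<^sub>\<infinity>k\<in>{m..}. of_nat (k choose m) * (\<Sum>\<^sub>\<infinity>w\<in>cluster_words E L F k. f w)) = s"
proof -
  let ?g = "\<lambda>w. of_nat (card (large_clusters L F w) choose m) * f w"
  define A where "A = {w \<in> words E {}. m \<le> card (large_clusters L F w)}"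
  have "(?g has_sum s) A"
    using assms by (rule has_sum_cong_neutral[THEN iffD1, rotated 3]) (auto simp: A_def binomial_eq_0)
  then have "((\<lambda>k. \<Sum>\<^sub>\<infinity>w\<in>{w\<in>A. card (large_clusters L F w) = k}. ?g w) has_sum s) {m..}"
    by (rule has_sum_group) (auto simp: A_def)
  moreover have "(\<Sum>\<^sub>\<infinity>w\<in>{w\<in>A. card (large_clusters L F w) = k}. ?g w) =
      of_nat (k choose m) * (\<Sum>\<^sub>\<infinity>w\<in>cluster_words E L F k. f w)" if "k \<in> {m..}" for k
  proof -
    have "{w\<in>A. card (large_clusters L F w) = k} = cluster_words E L F k"
      using that by (auto simp: A_def words_def cluster_words_def large_clusters_def)
    moreover have "(\<Sum>\<^sub>\<infinity>w\<in>cluster_words E L F k. ?g w) = (\<Sum>\<^sub>\<infinity>w\<in>cluster_words E L F k. of_nat (k choose m) * f w)"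
      by (rule infsum_cong) (simp add: cluster_words_def large_clusters_def)
    ultimately show ?thesis
      by (simp add: infsum_cmult_right')
  qed
  ultimately have "((\<lambda>k. of_nat (k choose m) * (\<Sum>\<^sub>\<infinity>w\<in>cluster_words E L F k. f w)) has_sum s) {m..}"
    by (rule has_sum_cong[THEN iffD1, rotated]) simp
  then show ?thesis
    by (rule infsumI)
qed

section \<open>Word expansion of \<open>\<rho>\<close>\<close>

locale local_hamiltonian =
  fixes d :: "'v::finite \<Rightarrow> nat" and h :: "'v set \<Rightarrow> 'v qop" and E :: "'v set set" and \<beta> :: real
  assumes supported_in_term: "\<And>l. l \<in> E \<Longrightarrow> supported_in d l (h l)"
    and term_nonempty: "\<And>l. l \<in> E \<Longrightarrow> l \<noteq> {}"
begin

lemma finite_E: "finite E"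
  by (rule finite_subset[of _ UNIV]) auto

lemma non_overlapping_imp_disjoint: "A \<subseteq> E \<Longrightarrow> non_overlapping A B \<Longrightarrow> A \<inter> B = {}"
  using term_nonempty unfolding non_overlapping_def by fastforce

lemma op_commute_term_wordop:
  assumes "a \<in> E" "set v \<subseteq> E" "\<forall>b\<in>set v. a \<inter> b = {}"
  shows "op_commute d (h a) (wordop d h v)"
  using assms
proof (induction v)
  case Nil
  then show ?case
    by (simp add: op_commute_opid)
next
  case (Cons b v)
  then have "op_commute d (h a) (h b)"
    by (intro supported_in_disjoint_commute[OF supported_in_term supported_in_term]) auto
  with Cons show ?case
    by (auto intro: op_commute_opmult)
qed

lemma wordop_shuffle:
  assumes "w \<in> shuffles u v" "set u \<subseteq> E" "set v \<subseteq> E" "non_overlapping (set u) (set v)"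
  shows "op_eq d (wordop d h w) (opmult d (wordop d h u) (wordop d h v))"
  using assms
proof (induction u v arbitrary: w rule: shuffles.induct)
  case (1 ys)
  then show ?case
    by (simp add: op_eq_sym[OF opmult_opid_left])
next
  case (2 x xs)
  then show ?case
    by (simp add: op_eq_sym[OF opmult_opid_right])
next
  case (3 x xs y ys)
  let ?X = "wordop d h (x # xs)" and ?Y = "wordop d h (y # ys)"
  from "3.prems"(1) consider
      (left) w' where "w = x # w'" "w' \<in> shuffles xs (y # ys)"
    | (right) w' where "w = y # w'" "w' \<in> shuffles (x # xs) ys"
    by auto
  then show ?case
  proof cases
    case left
    then have "op_eq d (wordop d h w) (opmult d (h x) (opmult d (wordop d h xs) ?Y))"
      using "3.IH"(1) "3.prems" by (auto simp: non_overlapping_def intro: opmult_cong)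
    then show ?thesis
      by (simp add: opmult_assoc)
  next
    case right
    have "op_commute d (h y) ?X"
      using "3.prems" by (intro op_commute_term_wordop) (auto simp: non_overlapping_def)
    have "op_eq d (wordop d h w) (opmult d (h y) (opmult d ?X (wordop d h ys)))"
      using right "3.IH"(2) "3.prems" by (auto simp: non_overlapping_def intro: opmult_cong)
    also have "op_eq d \<dots> (opmult d (opmult d ?X (h y)) (wordop d h ys))"
      using \<open>op_commute d (h y) ?X\<close> unfolding op_commute_def opmult_assoc[symmetric]
      by (rule opmult_cong[OF _ op_eq_refl])
    finally show ?thesis
      by (simp add: opmult_assoc)
  qed
qed

lemma wordop_norm_bound:
  obtains K where "K \<ge> 0"
    and "\<And>w \<sigma> \<tau>. set w \<subseteq> E \<Longrightarrow> \<sigma> \<in> conf d \<Longrightarrow> \<tau> \<in> conf d \<Longrightarrow> norm (wordop d h w \<sigma> \<tau>) \<le> K ^ length w"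
proof
  define M where "M = (\<Sum>l\<in>E. \<Sum>\<sigma>\<in>conf d. \<Sum>\<tau>\<in>conf d. norm (h l \<sigma> \<tau>))"
  have M: "norm (h l \<sigma> \<tau>) \<le> M" if "l \<in> E" "\<sigma> \<in> conf d" "\<tau> \<in> conf d" for l \<sigma> \<tau>
  proof -
    have "norm (h l \<sigma> \<tau>) \<le> (\<Sum>\<tau>\<in>conf d. norm (h l \<sigma> \<tau>))"
      using that by (intro member_le_sum) (auto simp: finite_conf)
    also have "\<dots> \<le> (\<Sum>\<sigma>\<in>conf d. \<Sum>\<tau>\<in>conf d. norm (h l \<sigma> \<tau>))"
      using that by (intro member_le_sum[of _ _ "\<lambda>\<sigma>. \<Sum>\<tau>\<in>conf d. norm (h l \<sigma> \<tau>)"])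
        (auto simp: finite_conf sum_nonneg)
    also have "\<dots> \<le> M"
      unfolding M_def using that
      by (intro member_le_sum[of _ _ "\<lambda>l. \<Sum>\<sigma>\<in>conf d. \<Sum>\<tau>\<in>conf d. norm (h l \<sigma> \<tau>)"])
        (auto simp: finite_E sum_nonneg)
    finally show ?thesis .
  qed
  have "M \<ge> 0"
    unfolding M_def by (simp add: sum_nonneg)
  then show "real (card (conf d)) * M \<ge> 0"
    by simp
  show "norm (wordop d h w \<sigma> \<tau>) \<le> (real (card (conf d)) * M) ^ length w"
    if "set w \<subseteq> E" "\<sigma> \<in> conf d" "\<tau> \<in> conf d" for w \<sigma> \<tau>
    using that
  proof (induction w arbitrary: \<sigma>)
    case Nil
    then show ?case
      by (simp add: opid_def)
  next
    case (Cons x w)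
    have "norm (wordop d h (x # w) \<sigma> \<tau>) \<le> (\<Sum>\<rho>\<in>conf d. norm (h x \<sigma> \<rho>) * norm (wordop d h w \<rho> \<tau>))"
      unfolding wordop_Cons opmult_def norm_mult[symmetric] by (rule norm_sum)
    also have "\<dots> \<le> (\<Sum>\<rho>\<in>conf d. M * (real (card (conf d)) * M) ^ length w)"
      using Cons \<open>M \<ge> 0\<close> by (intro sum_mono mult_mono M) auto
    finally show ?case
      by simp
  qed
qed

lemma fw_abs_summable:
  assumes "\<sigma> \<in> conf d" "\<tau> \<in> conf d"
  shows "(\<lambda>w. norm (fw d h \<beta> w \<sigma> \<tau>)) summable_on words E {}"
proof (rule nonneg_bdd_above_summable_on)
  obtain K where K: "K \<ge> 0"
    "\<And>w. set w \<subseteq> E \<Longrightarrow> norm (wordop d h w \<sigma> \<tau>) \<le> K ^ length w"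
    using wordop_norm_bound assms by metis
  define x where "x = \<bar>\<beta>\<bar> * K"
  have x: "x \<ge> 0"
    using K by (simp add: x_def)
  have fw: "norm (fw d h \<beta> w \<sigma> \<tau>) \<le> x ^ length w / fact (length w)" if "set w \<subseteq> E" for w
  proof -
    have "norm (fw d h \<beta> w \<sigma> \<tau>) = \<bar>\<beta>\<bar> ^ length w / fact (length w) * norm (wordop d h w \<sigma> \<tau>)"
      by (simp add: fw_def opscale_def norm_mult norm_divide norm_power)
    also have "\<dots> \<le> \<bar>\<beta>\<bar> ^ length w / fact (length w) * K ^ length w"
      using K that by (intro mult_left_mono) auto
    finally show ?thesis
      by (simp add: x_def power_mult_distrib)
  qed
  show "bdd_above (sum (\<lambda>w. norm (fw d h \<beta> w \<sigma> \<tau>)) ` {F. F \<subseteq> words E {} \<and> finite F})"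
  proof (rule bdd_aboveI2)
    fix F assume F: "F \<in> {F. F \<subseteq> words E {} \<and> finite F}"
    then have "(\<Sum>w\<in>F. norm (fw d h \<beta> w \<sigma> \<tau>)) \<le> (\<Sum>w\<in>F. x ^ length w / fact (length w))"
      by (intro sum_mono fw) (auto simp: words_def)
    also have "\<dots> \<le> exp (real (card E) * x)"
      using F x by (intro sum_words_le_exp finite_E) (auto simp: words_def)
    finally show "(\<Sum>w\<in>F. norm (fw d h \<beta> w \<sigma> \<tau>)) \<le> exp (real (card E) * x)" .
  qed
qed simp

lemma fw_summable:
  assumes "\<sigma> \<in> conf d" "\<tau> \<in> conf d" "X \<subseteq> words E {}"
  shows "(\<lambda>w. fw d h \<beta> w \<sigma> \<tau>) summable_on X"
  using abs_summable_summable[OF fw_abs_summable[OF assms(1,2)]] assms(3)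
  by (rule summable_on_subset_banach)

lemma words_subset: "X \<subseteq> E \<Longrightarrow> words X Y \<subseteq> words E {}"
  unfolding words_def by auto

definition word_sum :: "'v set set \<Rightarrow> 'v set set \<Rightarrow> 'v qop" where
  "word_sum X Y = (\<lambda>\<sigma> \<tau>. \<Sum>\<^sub>\<infinity>w\<in>words X Y. fw d h \<beta> w \<sigma> \<tau>)"

lemma opmult_fw_eq_sum_shuffles:
  assumes AB: "A \<union> B \<subseteq> E" "non_overlapping A B" and u: "set u \<subseteq> A" and v: "set v \<subseteq> B"
    and \<sigma>: "\<sigma> \<in> conf d" and \<tau>: "\<tau> \<in> conf d"
  shows "opmult d (fw d h \<beta> u) (fw d h \<beta> v) \<sigma> \<tau> = (\<Sum>w\<in>shuffles u v. fw d h \<beta> w \<sigma> \<tau>)"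
proof -
  let ?c = "exp_coeff (- complex_of_real \<beta>)" and ?X = "opmult d (wordop d h u) (wordop d h v) \<sigma> \<tau>"
  have uv: "set u \<subseteq> E" "set v \<subseteq> E" "non_overlapping (set u) (set v)"
    using AB u v by (auto simp: non_overlapping_def)
  have "fw d h \<beta> w \<sigma> \<tau> = ?c (length u + length v) * ?X" if "w \<in> shuffles u v" for w
  proof -
    have "wordop d h w \<sigma> \<tau> = ?X"
      using wordop_shuffle[OF that uv] \<sigma> \<tau> by (simp add: op_eq_def)
    then show ?thesis
      using length_shuffles[OF that] by (simp add: fw_eq_opscale opscale_def)
  qed
  then have "(\<Sum>w\<in>shuffles u v. fw d h \<beta> w \<sigma> \<tau>) =
      of_nat (card (shuffles u v)) * ?c (length u + length v) * ?X"
    by simp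
  also have "\<dots> = ?c (length u) * ?c (length v) * ?X"
    using non_overlapping_imp_disjoint[OF _ uv(3)] uv(1)
    by (simp add: card_disjoint_shuffles exp_coeff_add)
  finally show ?thesis
    unfolding fw_eq_opscale opmult_opscale by (simp add: opscale_def)
qed

lemma word_sum_Un:
  assumes AB: "A \<union> B \<subseteq> E" "non_overlapping A B" and "A' \<subseteq> A" "B' \<subseteq> B"
  shows "op_eq d (word_sum (A \<union> B) (A' \<union> B')) (opmult d (word_sum A A') (word_sum B B'))"
  unfolding op_eq_def
proof (intro ballI)
  fix \<sigma> \<tau> assume \<sigma>: "\<sigma> \<in> conf d" and \<tau>: "\<tau> \<in> conf d"
  have "A \<inter> B = {}"
    using AB non_overlapping_imp_disjoint by blast
  have "opmult d (word_sum A A') (word_sum B B') \<sigma> \<tau> =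
      (\<Sum>\<^sub>\<infinity>(u, v)\<in>words A A' \<times> words B B'. opmult d (fw d h \<beta> u) (fw d h \<beta> v) \<sigma> \<tau>)"
    unfolding word_sum_def using AB \<sigma> \<tau>
    by (intro opmult_infsum fw_summable words_subset) auto
  also have "\<dots> = (\<Sum>\<^sub>\<infinity>(u, v)\<in>words A A' \<times> words B B'. \<Sum>w\<in>shuffles u v. fw d h \<beta> w \<sigma> \<tau>)"
    using \<sigma> \<tau> by (intro infsum_cong) (auto simp: words_def intro!: opmult_fw_eq_sum_shuffles[OF AB])
  also have "\<dots> = word_sum (A \<union> B) (A' \<union> B') \<sigma> \<tau>"
    unfolding word_sum_def using assms \<open>A \<inter> B = {}\<close> \<sigma> \<tau>
    by (intro infsum_words_Un_shuffles fw_summable words_subset) auto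
  finally show "word_sum (A \<union> B) (A' \<union> B') \<sigma> \<tau> = opmult d (word_sum A A') (word_sum B B') \<sigma> \<tau>"
    by simp
qed

lemma opexp_eq_word_sum:
  assumes R: "R \<subseteq> E"
  shows "op_eq d (opexp d (opscale (- complex_of_real \<beta>) (opsum R h))) (word_sum R {})"
  unfolding op_eq_def
proof (intro ballI)
  fix \<sigma> \<tau> assume \<sigma>: "\<sigma> \<in> conf d" and \<tau>: "\<tau> \<in> conf d"
  define W where "W = (\<lambda>n. {w. set w \<subseteq> R \<and> length w = n})"
  have W: "{w \<in> words R {}. length w = n} = W n" "finite (W n)" for n
    using finite_subset[OF R finite_E] by (auto simp: W_def words_def finite_lists_length_eq)
  have "((\<lambda>w. fw d h \<beta> w \<sigma> \<tau>) has_sum word_sum R {} \<sigma> \<tau>) (words R {})"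
    unfolding word_sum_def using R \<sigma> \<tau> by (intro has_sum_infsum fw_summable words_subset)
  from has_sum_group[OF this, of length UNIV]
  have "(\<lambda>n. \<Sum>w\<in>W n. fw d h \<beta> w \<sigma> \<tau>) sums word_sum R {} \<sigma> \<tau>"
    by (intro has_sum_imp_sums) (simp add: W)
  moreover have "oppow d (opscale (- complex_of_real \<beta>) (opsum R h)) n \<sigma> \<tau> / of_nat (fact n) =
      (\<Sum>w\<in>W n. fw d h \<beta> w \<sigma> \<tau>)" for n
  proof -
    let ?c = "exp_coeff (- complex_of_real \<beta>) n"
    have "oppow d (opscale (- complex_of_real \<beta>) (opsum R h)) n \<sigma> \<tau> / of_nat (fact n) =
        ?c * (\<Sum>w\<in>W n. wordop d h w \<sigma> \<tau>)"
      using oppow_opsum_eq_sum_words[of d "- complex_of_real \<beta>" R h n] \<sigma> \<tau>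
      unfolding op_eq_def W_def exp_coeff_def by (simp add: opscale_def opsum_def)
    also have "\<dots> = (\<Sum>w\<in>W n. fw d h \<beta> w \<sigma> \<tau>)"
      unfolding sum_distrib_left by (intro sum.cong) (auto simp: W_def fw_eq_opscale opscale_def)
    finally show ?thesis .
  qed
  ultimately show "opexp d (opscale (- complex_of_real \<beta>) (opsum R h)) \<sigma> \<tau> = word_sum R {} \<sigma> \<tau>"
    by (simp add: opexp_def sums_iff)
qed

lemma eta_eq_word_sum: "eta d h \<beta> = (\<lambda>C. word_sum C C)"
  by (simp add: fun_eq_iff eta_def word_sum_def words_def)

lemma word_sum_empty: "op_eq d (word_sum {} {}) opid"
proof -
  have "words {} {} = {[] :: 'v set list}"
    by (auto simp: words_def)
  then show ?thesis
    unfolding op_eq_def word_sum_def by (simp add: fw_def opscale_def)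
qed

lemma foldr_eta_eq_word_sum:
  assumes "distinct cs" "set cs \<subseteq> S" "separated_animals E S"
  shows "op_eq d (foldr (opmult d) (map (eta d h \<beta>) cs) opid) (word_sum (\<Union>(set cs)) (\<Union>(set cs)))"
  using assms(1,2)
proof (induction cs)
  case Nil
  then show ?case
    by (simp add: op_eq_sym[OF word_sum_empty])
next
  case (Cons C cs)
  let ?U = "\<Union>(set cs)"
  have C: "C \<in> S" "C \<notin> set cs" and cs: "set cs \<subseteq> S"
    using Cons.prems by auto
  have "non_overlapping C ?U"
    unfolding non_overlapping_def
  proof (intro ballI)
    fix a b assume a: "a \<in> C" and "b \<in> ?U"
    then obtain C' where C': "C' \<in> set cs" "b \<in> C'"
      by auto
    then have "C' \<in> S" "C' \<noteq> C"
      using C cs by auto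
    then have "non_overlapping C C'"
      using assms(3) C(1) unfolding separated_animals_def pairwise_def by blast
    then show "a \<inter> b = {}"
      using a C' unfolding non_overlapping_def by auto
  qed
  moreover have "C \<union> ?U \<subseteq> E"
    using C cs assms(3) by (auto simp: separated_animals_def)
  ultimately have "op_eq d (opmult d (word_sum C C) (word_sum ?U ?U)) (word_sum (C \<union> ?U) (C \<union> ?U))"
    by (intro op_eq_sym[OF word_sum_Un]) auto
  moreover have "op_eq d (foldr (opmult d) (map (eta d h \<beta>) (C # cs)) opid)
      (opmult d (word_sum C C) (word_sum ?U ?U))"
    using Cons by (simp add: eta_eq_word_sum opmult_cong)
  ultimately show ?case
    by (simp add: op_eq_trans)
qed

lemma rhoG_Union:
  assumes S: "separated_animals E S" and \<sigma>: "\<sigma> \<in> conf d" and \<tau>: "\<tau> \<in> conf d"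
  shows "rhoG d h \<beta> E (\<Union>S) \<sigma> \<tau> =
    (\<Sum>\<^sub>\<infinity>w\<in>{w \<in> words E {}. S \<subseteq> edge_components (set w)}. fw d h \<beta> w \<sigma> \<tau>)"
proof -
  define R where "R = E - edge_closure E (\<Union>S)"
  have SE: "\<Union>S \<subseteq> E"
    using S by (auto simp: separated_animals_def)
  have "finite S"
    using S finite_subset[of S "Pow E"] finite_E by (auto simp: separated_animals_def)
  define cs where "cs = (SOME cs. distinct cs \<and> set cs = edge_components (\<Union>S))"
  have "distinct cs \<and> set cs = S"
    unfolding cs_def edge_components_Union[OF S]
    by (rule someI_ex) (use finite_distinct_list[OF \<open>finite S\<close>] in blast)
  then have "op_eq d (foldr (opmult d) (map (eta d h \<beta>) cs) opid) (word_sum (\<Union>S) (\<Union>S))"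
    using foldr_eta_eq_word_sum[of cs S] S by simp
  then have "op_eq d (rhoG d h \<beta> E (\<Union>S)) (opmult d (word_sum R {}) (word_sum (\<Union>S) (\<Union>S)))"
    unfolding rhoG_def R_def[symmetric] cs_def[symmetric] by (intro opmult_cong opexp_eq_word_sum) (auto simp: R_def)
  also have "op_eq d \<dots> (word_sum (R \<union> \<Union>S) ({} \<union> \<Union>S))"
    using SE by (intro op_eq_sym[OF word_sum_Un])
      (auto simp: R_def non_overlapping_def edge_closure_def)
  finally have "rhoG d h \<beta> E (\<Union>S) \<sigma> \<tau> = word_sum (R \<union> \<Union>S) (\<Union>S) \<sigma> \<tau>"
    using \<sigma> \<tau> by (simp add: op_eq_def)
  moreover have "w \<in> words (R \<union> \<Union>S) (\<Union>S) \<longleftrightarrow> set w \<subseteq> E \<and> S \<subseteq> edge_components (set w)" for w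
  proof -
    have "w \<in> words (R \<union> \<Union>S) (\<Union>S) \<longleftrightarrow> set w \<subseteq> E \<and> \<Union>S \<subseteq> set w \<and> set w \<subseteq> \<Union>S \<union> R"
      using SE unfolding words_def R_def by blast
    then show ?thesis
      using subset_edge_components_iff[OF S, of "set w"] by (auto simp: R_def)
  qed
  ultimately show ?thesis
    by (simp add: word_sum_def words_def)
qed

lemma rho_m_eq_sum_animal_choices:
  assumes L: "L \<ge> 1" and \<sigma>: "\<sigma> \<in> conf d" and \<tau>: "\<tau> \<in> conf d"
  shows "rho_m d h \<beta> E L F m \<sigma> \<tau> =
    (\<Sum>S\<in>animal_choices E L F m. \<Sum>\<^sub>\<infinity>w\<in>{w \<in> words E {}. S \<subseteq> edge_components (set w)}. fw d h \<beta> w \<sigma> \<tau>)"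
proof -
  have "animals_m E L F m = Union ` animal_choices E L F m"
    unfolding animals_m_def animal_choices_def by auto
  moreover have "inj_on Union (animal_choices E L F m)"
    using edge_components_Union[OF separated_animals_choice[OF L]] by (metis inj_onI)
  ultimately show ?thesis
    unfolding rho_m_def opsum_def
    by (simp add: sum.reindex rhoG_Union[OF separated_animals_choice[OF L] \<sigma> \<tau>])
qed

end

theorem lemma10:
  fixes d :: "'v::finite \<Rightarrow> nat" and h :: "'v set \<Rightarrow> 'v qop"
    and E F :: "'v set set" and \<beta> :: real and L m :: nat
    and \<sigma> \<tau> :: "'v \<Rightarrow> nat"
  assumes "\<forall>x. d x \<ge> 1"
    and "\<forall>l\<in>E. l \<noteq> {}"
    and "\<forall>l\<in>E. supported_in d l (h l)"
    and "\<forall>l\<in>E. hermitian d (h l)"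
    and "F \<subseteq> E" and "L \<ge> 1" and "m \<ge> 1"
    and "\<sigma> \<in> conf d" and "\<tau> \<in> conf d"
  shows "rho_m d h \<beta> E L F m \<sigma> \<tau> =
    (\<Sum>\<^sub>\<infinity>k\<in>{m..}. of_nat (k choose m) * (\<Sum>\<^sub>\<infinity>w\<in>cluster_words E L F k. fw d h \<beta> w \<sigma> \<tau>))"
proof -
  interpret local_hamiltonian d h E \<beta>
    by unfold_locales (use assms(2,3) in auto)
  let ?f = "\<lambda>w. fw d h \<beta> w \<sigma> \<tau>"
  have "((\<lambda>w. of_nat (card {S \<in> animal_choices E L F m. S \<subseteq> edge_components (set w)}) * ?f w)
      has_sum rho_m d h \<beta> E L F m \<sigma> \<tau>) (words E {})"
    using has_sum_double_counting[OF finite_animal_choices fw_summable[OF assms(8,9) order_refl]]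
    by (simp add: rho_m_eq_sum_animal_choices[OF assms(6,8,9)] words_def)
  then have "((\<lambda>w. of_nat (card (large_clusters L F w) choose m) * ?f w)
      has_sum rho_m d h \<beta> E L F m \<sigma> \<tau>) (words E {})"
    by (rule has_sum_cong[THEN iffD1, rotated]) (simp add: card_animal_choices_components words_def)
  then show ?thesis
    by (rule infsum_cluster_words[symmetric])
qed

end
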